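(* Let $k\ge 1$ and $\ast\in\{\Box,\circ\}$. Let $\mathcal M^\ast_{2k+1,0}\subseteq \mathcal M^\ast_{2k+1}$ be the set of those colorings whose central square $k+1$ is land. Then the map $\mathrm{red}\circ\mathrm{contr}$ is a bijection $\mathcal M^\ast_{2k+1,0}\to\mathcal N_k$.
   Context: Colorings. Each square of a square-tiled surface is colored water or land. Two distinct squares are adjacent if they share an edge after all edge identifications; a set of squares is connected if its induced adjacency graph is connected (empty set counts as connected). (N1): the water is connected. For an interior (non-boundary) vertex $v$, its square-degree is the number of distinct squares having $v$ as a corner. (N2$\Box$): no interior vertex of square-degree $4$ has all incident squares water. (N2$\circ$): no interior vertex of any square-degree has all incident squares water. A $2\times k$ Nurikabe rectangle is a coloring of the $2\times k$ grid (no identifications) with connected water and no $2\times 2$ block of water squares; $\mathcal N_k$ is the set of these. Tile $[0,n]\times[0,1]$ by unit squares $[j-1,j]\times[0,1]$, called square $j$. The $1\times n$ Möbius strip identifies $(x,1)\sim(n-x,0)$ for $x\in[0,n]$ (top edge of square $j$ glued to bottom edge of square $n+1-j$); its boundary is the image of the vertical sides. $\mathcal M^\ast_n$ is the set of colorings of the $1\times n$ Möbius strip satisfying (N1) and (N2$\ast$). Contraction: for a coloring of the $1\times(2k+1)$ Möbius strip, $\mathrm{contr}$ gives the coloring of the $1\times 2k$ Möbius strip obtained by deleting square $k+1$, with square $j\le k$ keeping position $j$ and square $j\ge k+2$ moving to position $j-1$. Rectangular reduction: for a coloring of the $1\times 2k$ Möbius strip, $\mathrm{red}$ gives the coloring of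 the $2\times k$ grid whose column $j$ ($1\le j\le k$) has top square colored as square $j$ and bottom square colored as square $2k+1-j$. *)

theory Defs
  imports Main
begin

text \<open>A coloring is represented by its set of water squares.\<close>

definition sq_connected :: "('a \<Rightarrow> 'a \<Rightarrow> bool) \<Rightarrow> 'a set \<Rightarrow> bool" where
  "sq_connected adj S \<longleftrightarrow>
     (\<forall>a\<in>S. \<forall>b\<in>S. (a, b) \<in> {(x, y). x \<in> S \<and> y \<in> S \<and> adj x y}\<^sup>*)"

datatype rule_kind = Box | Circ

text \<open>Squares 1..n of the 1 x n Moebius strip; j and j+1 share a vertical edge,
  top of j is glued to bottom of n+1-j.\<close>
definition mob_adj :: "nat \<Rightarrow> nat \<Rightarrow> nat \<Rightarrow> bool" where
  "mob_adj n i j \<longleftrightarrow> i \<in> {1..n} \<and> j \<in> {1..n} \<and> i \<noteq> j \<and>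
     (i + 1 = j \<or> j + 1 = i \<or> i + j = n + 1)"

text \<open>Interior vertices are the classes {(x,0),(n-x,1)} for 1 <= x <= n-1;
  the squares incident to such a vertex:\<close>
definition mob_vsq :: "nat \<Rightarrow> nat \<Rightarrow> nat set" where
  "mob_vsq n x = {x, x + 1, n - x, n + 1 - x}"

definition mob_N2 :: "rule_kind \<Rightarrow> nat \<Rightarrow> nat set \<Rightarrow> bool" where
  "mob_N2 s n W \<longleftrightarrow> (\<forall>x\<in>{1..n-1}.
     (s = Circ \<or> card (mob_vsq n x) = 4) \<longrightarrow> \<not> mob_vsq n x \<subseteq> W)"

definition Mob :: "rule_kind \<Rightarrow> nat \<Rightarrow> nat set set" where
  "Mob s n = {W. W \<subseteq> {1..n} \<and> sq_connected (mob_adj n) W \<and> mob_N2 s n W}"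

text \<open>2 x k grid: square (j,r), column j in 1..k, row r in {1,2} (1 = top).\<close>
definition grid_adj :: "nat \<Rightarrow> nat \<times> nat \<Rightarrow> nat \<times> nat \<Rightarrow> bool" where
  "grid_adj k p q \<longleftrightarrow> p \<in> {1..k} \<times> {1,2} \<and> q \<in> {1..k} \<times> {1,2} \<and>
     ((fst p = fst q \<and> snd p \<noteq> snd q) \<or>
      (snd p = snd q \<and> (fst p + 1 = fst q \<or> fst q + 1 = fst p)))"

definition Nurikabe :: "nat \<Rightarrow> (nat \<times> nat) set set" where
  "Nurikabe k = {W. W \<subseteq> {1..k} \<times> {1,2} \<and> sq_connected (grid_adj k) W \<and>
     \<not> (\<exists>j\<in>{1..<k}. {(j,1),(j,2),(j+1,1),(j+1,2)} \<subseteq> W)}"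

definition contr :: "nat \<Rightarrow> nat set \<Rightarrow> nat set" where
  "contr k W = {j \<in> W. j \<le> k} \<union> {j - 1 | j. j \<in> W \<and> k + 2 \<le> j}"

definition red :: "nat \<Rightarrow> nat set \<Rightarrow> (nat \<times> nat) set" where
  "red k W = {(j, 1) | j. j \<in> {1..k} \<and> j \<in> W} \<union>
             {(j, 2) | j. j \<in> {1..k} \<and> 2 * k + 1 - j \<in> W}"

end

theory Submission
  imports Defs
begin

text \<open>Away from the central square \<open>k + 1\<close>, the map sending square \<open>i \<le> k\<close> of the
  \<open>1 \<times> (2k+1)\<close> Moebius strip to the top cell of column \<open>i\<close> and square \<open>i \<ge> k + 2\<close> to the
  bottom cell of column \<open>2k + 2 - i\<close> is a bijection onto the cells of the \<open>2 \<times> k\<close> grid, and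
  \<open>red \<circ> contr\<close> is just the induced map on sets of water squares. This bijection is a graph
  isomorphism between the two adjacency relations, so it preserves connectedness of the water,
  and it carries the four squares around each interior vertex of the strip not touching the
  central square onto a \<open>2 \<times> 2\<close> block of the grid. The two vertices touching the central square
  are the only ones with fewer than four incident squares, and they can never be surrounded by
  water because the central square is land; hence both rules (N2) become the Nurikabe rule.\<close>

definition grid_square :: "nat \<Rightarrow> nat \<Rightarrow> nat \<times> nat" where
  "grid_square k i = (if i \<le> k then (i, 1) else (2 * k + 2 - i, 2))"

lemma sq_connected_image:
  assumes "sq_connected adj S"
    and "\<And>a b. a \<in> S \<Longrightarrow> b \<in> S \<Longrightarrow> adj a b \<Longrightarrow> adj' (f a) (f b)"
  shows "sq_connected adj' (f ` S)"
  unfolding sq_connected_def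
proof (intro ballI)
  fix x y assume "x \<in> f ` S" "y \<in> f ` S"
  then obtain a b where ab: "a \<in> S" "b \<in> S" "x = f a" "y = f b" by auto
  have "(a, b) \<in> {(x, y). x \<in> S \<and> y \<in> S \<and> adj x y}\<^sup>*"
    using assms(1) ab unfolding sq_connected_def by blast
  then have "(f a, f b) \<in> {(x, y). x \<in> f ` S \<and> y \<in> f ` S \<and> adj' x y}\<^sup>*"
  proof (induction rule: rtrancl_induct)
    case base
    show ?case by simp
  next
    case (step y z)
    then show ?case using assms(2) by (auto intro: rtrancl_into_rtrancl)
  qed
  then show "(x, y) \<in> {(x, y). x \<in> f ` S \<and> y \<in> f ` S \<and> adj' x y}\<^sup>*"
    using ab by simp
qed

lemma sq_connected_image_iff:
  assumes "inj_on f S"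
    and "\<And>a b. a \<in> S \<Longrightarrow> b \<in> S \<Longrightarrow> adj' (f a) (f b) \<longleftrightarrow> adj a b"
  shows "sq_connected adj' (f ` S) \<longleftrightarrow> sq_connected adj S"
proof
  assume "sq_connected adj' (f ` S)"
  then have "sq_connected adj (inv_into S f ` f ` S)"
    by (rule sq_connected_image) (use assms in \<open>auto simp: inv_into_into inv_into_f_f\<close>)
  then show "sq_connected adj S"
    using assms(1) by simp
next
  assume "sq_connected adj S"
  then show "sq_connected adj' (f ` S)"
    by (rule sq_connected_image) (use assms(2) in blast)
qed

lemma inj_on_image_subset_iff:
  "inj_on f C \<Longrightarrow> A \<subseteq> C \<Longrightarrow> B \<subseteq> C \<Longrightarrow> f ` A \<subseteq> f ` B \<longleftrightarrow> A \<subseteq> B"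
  by (blast dest: inj_onD)

lemma bij_betw_restrict_to_preimage:
  assumes "bij_betw f A B" and "C \<subseteq> B"
  shows "bij_betw f {x \<in> A. f x \<in> C} C"
proof (rule bij_betw_subset[OF assms(1)])
  show "f ` {x \<in> A. f x \<in> C} = C"
    using assms by (force simp: bij_betw_def)
qed auto

lemma bij_betw_grid_square:
  "bij_betw (grid_square k) ({1..2 * k + 1} - {k + 1}) ({1..k} \<times> {1, 2})"
proof (rule bij_betw_imageI)
  show "inj_on (grid_square k) ({1..2 * k + 1} - {k + 1})"
    by (rule inj_onI) (auto simp: grid_square_def split: if_splits)
  show "grid_square k ` ({1..2 * k + 1} - {k + 1}) = {1..k} \<times> {1, 2}"
  proof (intro equalityI subsetI)
    fix p assume "p \<in> {1..k} \<times> {1::nat, 2}"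
    then obtain j r where "p = (j, r)" "j \<in> {1..k}" "r = 1 \<or> r = 2" by auto
    then have "p = grid_square k (if r = 1 then j else 2 * k + 2 - j)"
      by (auto simp: grid_square_def)
    moreover have "(if r = 1 then j else 2 * k + 2 - j) \<in> {1..2 * k + 1} - {k + 1}"
      using \<open>j \<in> {1..k}\<close> by auto
    ultimately show "p \<in> grid_square k ` ({1..2 * k + 1} - {k + 1})" by blast
  qed (auto simp: grid_square_def)
qed

lemma red_contr_eq_image_grid_square:
  assumes "W \<subseteq> {1..2 * k + 1} - {k + 1}"
  shows "red k (contr k W) = grid_square k ` W"
proof (intro set_eqI iffI)
  fix p assume "p \<in> red k (contr k W)"
  then consider j where "p = (j, 1)" "j \<in> {1..k}" "j \<in> W"
    | j where "p = (j, 2)" "j \<in> {1..k}" "2 * k + 2 - j \<in> W"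
    unfolding red_def contr_def by (auto simp: Suc_diff_le)
  then show "p \<in> grid_square k ` W"
  proof cases
    case 1
    then show ?thesis by (force simp: grid_square_def)
  next
    case (2 j)
    then have "p = grid_square k (2 * k + 2 - j)" by (auto simp: grid_square_def)
    then show ?thesis using 2 by blast
  qed
next
  fix p assume "p \<in> grid_square k ` W"
  then obtain i where "i \<in> W" "p = grid_square k i" by blast
  moreover have "i \<in> {1..2 * k + 1} - {k + 1}" using \<open>i \<in> W\<close> assms by blast
  ultimately show "p \<in> red k (contr k W)"
    unfolding red_def contr_def grid_square_def
    by (cases "i \<le> k") (auto intro!: exI[of _ i])
qed

lemma grid_adj_grid_square_iff:
  assumes "a \<in> {1..2 * k + 1} - {k + 1}" and "b \<in> {1..2 * k + 1} - {k + 1}"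
  shows "grid_adj k (grid_square k a) (grid_square k b) \<longleftrightarrow> mob_adj (2 * k + 1) a b"
  using assms by (auto simp: grid_adj_def mob_adj_def grid_square_def)

lemma mob_vsq_reflect: "x \<le> n \<Longrightarrow> mob_vsq n (n - x) = mob_vsq n x"
  by (auto simp: mob_vsq_def)

lemma card_mob_vsq: "1 \<le> j \<Longrightarrow> j < k \<Longrightarrow> card (mob_vsq (2 * k + 1) j) = 4"
  unfolding mob_vsq_def by (simp add: card_insert_if) (intro conjI impI; linarith)

lemma image_grid_square_mob_vsq:
  "1 \<le> j \<Longrightarrow> j < k \<Longrightarrow>
    grid_square k ` mob_vsq (2 * k + 1) j = {(j, 1), (j, 2), (j + 1, 1), (j + 1, 2)}"
  by (auto simp: mob_vsq_def grid_square_def)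

lemma mob_N2_iff_low_vertices:
  assumes "W \<subseteq> {1..2 * k + 1} - {k + 1}"
  shows "mob_N2 s (2 * k + 1) W \<longleftrightarrow> (\<forall>j\<in>{1..<k}. \<not> mob_vsq (2 * k + 1) j \<subseteq> W)"
proof
  assume N2: "mob_N2 s (2 * k + 1) W"
  show "\<forall>j\<in>{1..<k}. \<not> mob_vsq (2 * k + 1) j \<subseteq> W"
  proof
    fix j assume j: "j \<in> {1..<k}"
    then have "card (mob_vsq (2 * k + 1) j) = 4" "j \<in> {1..2 * k + 1 - 1}"
      using card_mob_vsq[of j k] by auto
    then show "\<not> mob_vsq (2 * k + 1) j \<subseteq> W"
      using N2 unfolding mob_N2_def by blast
  qed
next
  assume low: "\<forall>j\<in>{1..<k}. \<not> mob_vsq (2 * k + 1) j \<subseteq> W"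
  have "\<not> mob_vsq (2 * k + 1) x \<subseteq> W" if "x \<in> {1..2 * k}" for x
  proof -
    consider "x = k \<or> x = k + 1" | "x < k" | "k + 1 < x" by linarith
    then show ?thesis
    proof cases
      case 1
      then have "k + 1 \<in> mob_vsq (2 * k + 1) x" by (auto simp: mob_vsq_def)
      then show ?thesis using assms by blast
    next
      case 2
      then show ?thesis using low that by auto
    next
      case 3
      then have "mob_vsq (2 * k + 1) x = mob_vsq (2 * k + 1) (2 * k + 1 - x)"
        using that by (simp add: mob_vsq_reflect)
      moreover have "2 * k + 1 - x \<in> {1..<k}" using 3 that by auto
      ultimately show ?thesis using low by metis
    qed
  qed
  then show "mob_N2 s (2 * k + 1) W" by (simp add: mob_N2_def)
qed

lemma mob_N2_iff_no_water_block:
  assumes "W \<subseteq> {1..2 * k + 1} - {k + 1}"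
  shows "mob_N2 s (2 * k + 1) W \<longleftrightarrow>
    \<not> (\<exists>j\<in>{1..<k}. {(j, 1), (j, 2), (j + 1, 1), (j + 1, 2)} \<subseteq> grid_square k ` W)"
proof -
  have inj: "inj_on (grid_square k) ({1..2 * k + 1} - {k + 1})"
    using bij_betw_grid_square bij_betw_imp_inj_on by blast
  have block: "mob_vsq (2 * k + 1) j \<subseteq> W \<longleftrightarrow>
      {(j, 1), (j, 2), (j + 1, 1), (j + 1, 2)} \<subseteq> grid_square k ` W"
    if "j \<in> {1..<k}" for j
  proof -
    have "mob_vsq (2 * k + 1) j \<subseteq> {1..2 * k + 1} - {k + 1}"
      using that by (auto simp: mob_vsq_def)
    then have "mob_vsq (2 * k + 1) j \<subseteq> W \<longleftrightarrow>
        grid_square k ` mob_vsq (2 * k + 1) j \<subseteq> grid_square k ` W"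
      using inj assms by (simp add: inj_on_image_subset_iff)
    also have "grid_square k ` mob_vsq (2 * k + 1) j = {(j, 1), (j, 2), (j + 1, 1), (j + 1, 2)}"
      using that image_grid_square_mob_vsq[of j k] by simp
    finally show ?thesis .
  qed
  show ?thesis
    unfolding mob_N2_iff_low_vertices[OF assms] using block by blast
qed

lemma Mob_central_land_eq:
  "{W \<in> Mob s (2 * k + 1). k + 1 \<notin> W} =
    {W \<in> Pow ({1..2 * k + 1} - {k + 1}). grid_square k ` W \<in> Nurikabe k}"
proof -
  let ?A = "{1..2 * k + 1} - {k + 1}"
  have "W \<in> Mob s (2 * k + 1) \<and> k + 1 \<notin> W \<longleftrightarrow> W \<subseteq> ?A \<and> grid_square k ` W \<in> Nurikabe k"
    for W
  proof (cases "W \<subseteq> ?A")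
    case True
    have "inj_on (grid_square k) W" "grid_square k ` W \<subseteq> {1..k} \<times> {1, 2}"
      using bij_betw_grid_square True by (auto simp: bij_betw_def intro: inj_on_subset)
    moreover have "sq_connected (grid_adj k) (grid_square k ` W) \<longleftrightarrow>
        sq_connected (mob_adj (2 * k + 1)) W"
      by (rule sq_connected_image_iff[OF \<open>inj_on (grid_square k) W\<close>])
        (use True grid_adj_grid_square_iff in blast)
    moreover note mob_N2_iff_no_water_block[OF True, of s]
    ultimately show ?thesis
      using True unfolding Mob_def Nurikabe_def mem_Collect_eq by blast
  next
    case False
    then show ?thesis by (auto simp: Mob_def)
  qed
  then show ?thesis by auto
qed

theorem lemma2p4:
  fixes k :: nat and s :: rule_kind
  assumes "k \<ge> 1"
  shows "bij_betw (red k \<circ> contr k) {W \<in> Mob s (2 * k + 1). k + 1 \<notin> W} (Nurikabe k)"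
proof -
  have "bij_betw (image (grid_square k))
      {W \<in> Pow ({1..2 * k + 1} - {k + 1}). grid_square k ` W \<in> Nurikabe k} (Nurikabe k)"
    by (rule bij_betw_restrict_to_preimage[OF bij_betw_Pow[OF bij_betw_grid_square]])
      (auto simp: Nurikabe_def)
  then show ?thesis
    unfolding Mob_central_land_eq
    by (rule bij_betw_cong[THEN iffD1, rotated]) (simp add: red_contr_eq_image_grid_square)
qed

end
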